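(* Let $\rho>0$ and let $v$ be a bounded, $1$-periodic (i.e. $v(z+1)=v(z)$), non-constant analytic function on the strip $\{z\in\mathbb{C}:|\operatorname{Im} z|<\rho\}$. Then for every $0<\delta<\rho$ and every $k\in\mathbb{N}$ there exists $\epsilon>0$, depending only on $\delta$, $k$ and $v$, such that for every $k$-tuple $(E_1,\dots,E_k)\in\mathbb{R}^k$, $$\sup_{\delta/2\le y\le\delta}\ \min_{1\le j\le k}\ \inf_{x\in[0,1]}\big|v(x+iy)-E_j\big|>\epsilon .$$ *)

theory Defs
  imports "HOL-Analysis.Analysis"
begin

end

theory Submission
  imports Defs "HOL-Complex_Analysis.Complex_Analysis"
begin

text \<open>
  Let \<open>R = [0,1] \<times> [a,b]\<close> be a compact rectangle in the strip. For a single level \<open>e\<close>, the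
  identity theorem leaves \<open>v - e\<close> only finitely many zeros in \<open>R\<close>, so some nondegenerate
  subinterval \<open>[a',b'] \<subseteq> [a,b]\<close> of heights avoids their imaginary parts; by compactness the
  horizontal traces \<open>v([0,1] + iy)\<close>, \<open>y \<in> [a',b']\<close>, then stay at a uniform positive distance from
  \<open>e\<close>, and hence from all levels near \<open>e\<close>. Inducting on the number of levels, the remaining levels
  are handled inside \<open>[a',b']\<close>; a finite subcover of the compact set of levels that can come
  close to \<open>v(R)\<close> makes the bound uniform.
\<close>

lemma interval_avoiding_finite_set:
  fixes a b :: real
  assumes "finite Z" "a < b"
  obtains a' b' where "a \<le> a'" "a' < b'" "b' \<le> b" "{a'..b'} \<inter> Z = {}"
proof -
  have "infinite ({a<..<b} - Z)"
    using assms by (simp add: Diff_infinite_finite)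
  then obtain x where x: "x \<in> {a<..<b} - Z"
    by (metis ex_in_conv finite.emptyI)
  moreover have "open ({a<..<b} - Z)"
    using assms by (simp add: open_Diff finite_imp_closed)
  ultimately obtain r where r: "r > 0" "{x - r..x + r} \<subseteq> {a<..<b} - Z"
    by (metis open_contains_cball cball_eq_atLeastAtMost)
  then have "x - r \<in> {a<..<b}" "x + r \<in> {a<..<b}"
    using subsetD[OF r(2), of "x - r"] subsetD[OF r(2), of "x + r"] by auto
  with r show thesis
    by (intro that[of "x - r" "x + r"]) auto
qed

lemma norm_diff_bound_le_infdist:
  fixes x :: "'a::real_normed_vector"
  assumes "A \<noteq> {}" "\<And>a. a \<in> A \<Longrightarrow> norm a \<le> B"
  shows "norm x - B \<le> infdist x A"
  unfolding infdist_notempty[OF assms(1)]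
proof (rule cINF_greatest[OF assms(1)])
  fix a assume "a \<in> A"
  then show "norm x - B \<le> dist x a"
    using assms(2)[of a] norm_triangle_ineq2[of x a] by (simp add: dist_norm)
qed

lemma compact_finite_ball_cover:
  fixes K :: "'a::metric_space set"
  assumes "compact K" "\<And>w. r w > 0"
  obtains D where "finite D" "K \<subseteq> (\<Union>w\<in>D. ball w (r w))"
proof (rule compactE_image[OF assms(1), where C = K and f = "\<lambda>w. ball w (r w)"])
  show "K \<subseteq> (\<Union>w\<in>K. ball w (r w))"
    using assms(2) by force
qed (blast intro: that)+

definition horizontal_trace :: "(complex \<Rightarrow> complex) \<Rightarrow> real \<Rightarrow> complex set" where
  "horizontal_trace v y = (\<lambda>x. v (Complex x y)) ` {0..1}"

lemma horizontal_trace_nonempty: "horizontal_trace v y \<noteq> {}"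
  by (simp add: horizontal_trace_def)

lemma infdist_horizontal_trace:
  "infdist w (horizontal_trace v y) = Inf ((\<lambda>x. cmod (v (Complex x y) - w)) ` {0..1})"
  unfolding horizontal_trace_def
  by (simp add: infdist_notempty image_image dist_norm norm_minus_commute[of w])

lemma horizontal_trace_subset:
  "y \<in> {a..b} \<Longrightarrow> horizontal_trace v y \<subseteq> v ` cbox (Complex 0 a) (Complex 1 b)"
  by (auto simp: horizontal_trace_def cbox_complex_eq)

lemma infdist_horizontal_trace_le: "infdist w (horizontal_trace v y) \<le> norm w + norm (v (Complex 0 y))"
proof -
  have "infdist w (horizontal_trace v y) \<le> dist w (v (Complex 0 y))"
    by (rule infdist_le) (simp add: horizontal_trace_def)
  then show ?thesis
    using norm_triangle_ineq4[of w "v (Complex 0 y)"] by (simp add: dist_norm)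
qed

lemma infdist_horizontal_trace_ge:
  assumes "y \<in> {a..b}" "\<And>z. z \<in> cbox (Complex 0 a) (Complex 1 b) \<Longrightarrow> norm (v z) \<le> B"
  shows "norm w - B \<le> infdist w (horizontal_trace v y)"
  using horizontal_trace_nonempty
proof (rule norm_diff_bound_le_infdist)
  show "norm u \<le> B" if "u \<in> horizontal_trace v y" for u
    using assms horizontal_trace_subset[OF assms(1)] that by blast
qed

lemma less_SUP_MIN_infdist_horizontal_trace:
  assumes "finite J" "J \<noteq> {}" "y0 \<in> Y" "\<forall>j\<in>J. \<epsilon> < infdist (E j) (horizontal_trace v y0)"
    and B: "\<And>y. y \<in> Y \<Longrightarrow> norm (v (Complex 0 y)) \<le> B"
  shows "\<epsilon> < (SUP y\<in>Y. MIN j\<in>J. infdist (E j) (horizontal_trace v y))"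
proof (subst less_cSUP_iff)
  obtain j0 where "j0 \<in> J"
    using assms(2) by blast
  show "bdd_above ((\<lambda>y. MIN j\<in>J. infdist (E j) (horizontal_trace v y)) ` Y)"
  proof (rule bdd_aboveI2)
    fix y assume "y \<in> Y"
    have "(MIN j\<in>J. infdist (E j) (horizontal_trace v y)) \<le> infdist (E j0) (horizontal_trace v y)"
      using assms(1) \<open>j0 \<in> J\<close> by (intro Min_le) auto
    also have "\<dots> \<le> norm (E j0) + B"
      using infdist_horizontal_trace_le[of "E j0" v y] B[OF \<open>y \<in> Y\<close>] by simp
    finally show "(MIN j\<in>J. infdist (E j) (horizontal_trace v y)) \<le> norm (E j0) + B" .
  qed
  show "\<exists>y\<in>Y. \<epsilon> < (MIN j\<in>J. infdist (E j) (horizontal_trace v y))"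
    using assms(1-4) by auto
qed (use assms(3) in auto)

context
  fixes v :: "complex \<Rightarrow> complex" and S :: "complex set"
  assumes holo: "v holomorphic_on S" and S: "open S" "connected S"
    and nonconst: "\<not> v constant_on S"
begin

lemma finite_level_set:
  assumes "compact K" "K \<subseteq> S"
  shows "finite {z\<in>K. v z = w}"
proof -
  have "\<not> (\<lambda>z. v z - w) constant_on S"
    using nonconst unfolding constant_on_def by (metis diff_eq_eq)
  moreover have "(\<lambda>z. v z - w) holomorphic_on S"
    using holo by (intro holomorphic_intros)
  ultimately show ?thesis
    using holomorphic_compact_finite_zeros[of "\<lambda>z. v z - w" S K] S assms by simp
qed

lemma level_avoided_on_subinterval:
  assumes "a < b" "cbox (Complex 0 a) (Complex 1 b) \<subseteq> S"
  obtains a' b' c where "a \<le> a'" "a' < b'" "b' \<le> b" "c > 0"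
    "\<And>y. y \<in> {a'..b'} \<Longrightarrow> c \<le> infdist w (horizontal_trace v y)"
proof -
  let ?K = "cbox (Complex 0 a) (Complex 1 b)"
  have "finite (Im ` {z\<in>?K. v z = w})"
    using finite_level_set assms by simp
  then obtain a' b' where ab': "a \<le> a'" "a' < b'" "b' \<le> b"
    and avoid: "{a'..b'} \<inter> Im ` {z\<in>?K. v z = w} = {}"
    using assms(1) by (rule interval_avoiding_finite_set)
  let ?K' = "cbox (Complex 0 a') (Complex 1 b')"
  have "?K' \<subseteq> ?K"
    using ab' by (auto simp: cbox_complex_eq)
  have "w \<notin> v ` ?K'"
  proof
    assume "w \<in> v ` ?K'"
    then obtain z where "z \<in> ?K'" "v z = w" by blast
    moreover from \<open>z \<in> ?K'\<close> have "Im z \<in> {a'..b'}"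
      by (simp add: cbox_complex_eq)
    ultimately have "Im z \<in> {a'..b'} \<inter> Im ` {z\<in>?K. v z = w}"
      using \<open>?K' \<subseteq> ?K\<close> by blast
    with avoid show False by blast
  qed
  have "continuous_on ?K' v"
    using \<open>?K' \<subseteq> ?K\<close> assms(2)
    by (intro holomorphic_on_imp_continuous_on holomorphic_on_subset[OF holo]) blast
  then have closed: "closed (v ` ?K')"
    by (intro compact_imp_closed compact_continuous_image compact_cbox)
  have "Complex 0 a' \<in> ?K'"
    using ab' by (simp add: cbox_complex_eq)
  then have "v ` ?K' \<noteq> {}"
    by blast
  with closed have pos: "infdist w (v ` ?K') > 0"
    using \<open>w \<notin> v ` ?K'\<close> by (rule infdist_pos_not_in_closed)
  have "infdist w (v ` ?K') \<le> infdist w (horizontal_trace v y)" if "y \<in> {a'..b'}" for y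
    by (rule infdist_mono[OF horizontal_trace_subset[OF that] horizontal_trace_nonempty])
  with ab' pos show thesis
    by (intro that) auto
qed

lemma levels_avoided_near:
  assumes IH: "\<And>a b. a < b \<Longrightarrow> cbox (Complex 0 a) (Complex 1 b) \<subseteq> S \<Longrightarrow>
      \<exists>\<epsilon>>0. \<forall>E::'a \<Rightarrow> complex. \<exists>y\<in>{a..b}. \<forall>i\<in>J. \<epsilon> < infdist (E i) (horizontal_trace v y)"
    and "a < b" "cbox (Complex 0 a) (Complex 1 b) \<subseteq> S"
  obtains r \<eta> where "r > 0" "\<eta> > 0"
    "\<And>E. dist (E j) w < r \<Longrightarrow>
       \<exists>y\<in>{a..b}. \<forall>i\<in>insert j J. \<eta> < infdist (E i) (horizontal_trace v y)"
proof -
  obtain a' b' c where ab': "a \<le> a'" "a' < b'" "b' \<le> b" and "c > 0"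
    and c: "\<And>y. y \<in> {a'..b'} \<Longrightarrow> c \<le> infdist w (horizontal_trace v y)"
    using level_avoided_on_subinterval[OF assms(2,3), where w = w] by blast
  have "cbox (Complex 0 a') (Complex 1 b') \<subseteq> S"
    using ab' assms(3) by (auto simp: cbox_complex_eq)
  then obtain \<epsilon> where "\<epsilon> > 0"
    and \<epsilon>: "\<And>E. \<exists>y\<in>{a'..b'}. \<forall>i\<in>J. \<epsilon> < infdist (E i) (horizontal_trace v y)"
    using IH ab'(2) by blast
  show thesis
  proof (rule that[of "c/2" "min (c/2) \<epsilon>"])
    fix E :: "'a \<Rightarrow> complex"
    assume near: "dist (E j) w < c/2"
    obtain y where y: "y \<in> {a'..b'}" "\<forall>i\<in>J. \<epsilon> < infdist (E i) (horizontal_trace v y)"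
      using \<epsilon> by blast
    have "c/2 < infdist (E j) (horizontal_trace v y)"
      using c[OF y(1)] infdist_triangle[of w "horizontal_trace v y" "E j"] near
      by (simp add: dist_commute)
    with y ab' show "\<exists>y\<in>{a..b}. \<forall>i\<in>insert j J. min (c/2) \<epsilon> < infdist (E i) (horizontal_trace v y)"
      by (intro bexI[of _ y]) auto
  qed (use \<open>c > 0\<close> \<open>\<epsilon> > 0\<close> in auto)
qed

lemma levels_avoided_insert:
  assumes IH: "\<And>a b. a < b \<Longrightarrow> cbox (Complex 0 a) (Complex 1 b) \<subseteq> S \<Longrightarrow>
      \<exists>\<epsilon>>0. \<forall>E::'a \<Rightarrow> complex. \<exists>y\<in>{a..b}. \<forall>i\<in>J. \<epsilon> < infdist (E i) (horizontal_trace v y)"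
    and "a < b" "cbox (Complex 0 a) (Complex 1 b) \<subseteq> S"
  shows "\<exists>\<epsilon>>0. \<forall>E::'a \<Rightarrow> complex. \<exists>y\<in>{a..b}.
           \<forall>i\<in>insert j J. \<epsilon> < infdist (E i) (horizontal_trace v y)"
proof -
  let ?K = "cbox (Complex 0 a) (Complex 1 b)"
  have "compact (v ` ?K)"
    using assms(3) by (intro compact_continuous_image compact_cbox holomorphic_on_imp_continuous_on
        holomorphic_on_subset[OF holo])
  then obtain B where B: "\<And>z. z \<in> ?K \<Longrightarrow> norm (v z) \<le> B"
    by (meson bounded_iff compact_imp_bounded image_eqI)
  have "\<forall>w. \<exists>r \<eta>. r > 0 \<and> \<eta> > 0 \<and> (\<forall>E. dist (E j) w < r \<longrightarrow>
          (\<exists>y\<in>{a..b}. \<forall>i\<in>insert j J. \<eta> < infdist (E i) (horizontal_trace v y)))"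
    by (metis levels_avoided_near[OF IH assms(2,3)])
  then obtain r \<eta> where r: "\<And>w. r w > 0" and "\<And>w. \<eta> w > 0"
    and \<eta>: "\<And>w E. dist (E j) w < r w \<Longrightarrow>
          \<exists>y\<in>{a..b}. \<forall>i\<in>insert j J. \<eta> w < infdist (E i) (horizontal_trace v y)"
    by metis
  \<comment> \<open>Levels far from the compact set \<open>v ` ?K\<close> are at distance \<open>\<ge> 1\<close> from every trace; the
    remaining ones are covered by finitely many of the balls just constructed.\<close>
  obtain D where "finite D" and D: "cball 0 (B + 1) \<subseteq> (\<Union>w\<in>D. ball w (r w))"
    using compact_cball r by (rule compact_finite_ball_cover)
  obtain \<epsilon>0 where "\<epsilon>0 > 0"
    and \<epsilon>0: "\<And>E. \<exists>y\<in>{a..b}. \<forall>i\<in>J. \<epsilon>0 < infdist (E i) (horizontal_trace v y)"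
    using IH assms(2,3) by blast
  define \<epsilon> where "\<epsilon> = Min (insert 1 (insert \<epsilon>0 (\<eta> ` D)))"
  have fin: "finite (insert 1 (insert \<epsilon>0 (\<eta> ` D)))"
    using \<open>finite D\<close> by simp
  have "\<epsilon> > 0"
    unfolding \<epsilon>_def using fin \<open>\<epsilon>0 > 0\<close> \<open>\<And>w. \<eta> w > 0\<close> by (auto simp: Min_gr_iff)
  have \<epsilon>_le: "\<epsilon> \<le> 1" "\<epsilon> \<le> \<epsilon>0" "\<And>w. w \<in> D \<Longrightarrow> \<epsilon> \<le> \<eta> w"
    unfolding \<epsilon>_def by (rule Min_le[OF fin]; simp)+
  have "\<exists>y\<in>{a..b}. \<forall>i\<in>insert j J. \<epsilon> < infdist (E i) (horizontal_trace v y)" for E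
  proof (cases "E j \<in> cball 0 (B + 1)")
    case True
    then obtain w where "w \<in> D" "dist (E j) w < r w"
      using D by (auto simp: dist_commute)
    with \<eta> \<epsilon>_le(3) show ?thesis
      by (meson order.strict_trans1)
  next
    case False
    obtain y where y: "y \<in> {a..b}" "\<forall>i\<in>J. \<epsilon>0 < infdist (E i) (horizontal_trace v y)"
      using \<epsilon>0 by blast
    have "norm (E j) - B \<le> infdist (E j) (horizontal_trace v y)"
      using y(1) B by (rule infdist_horizontal_trace_ge)
    with False \<epsilon>_le(1,2) y show ?thesis
      by (intro bexI[of _ y]) auto
  qed
  with \<open>\<epsilon> > 0\<close> show ?thesis
    by blast
qed

lemma levels_avoided:
  assumes "finite J" "a < b" "cbox (Complex 0 a) (Complex 1 b) \<subseteq> S"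
  shows "\<exists>\<epsilon>>0. \<forall>E::'a \<Rightarrow> complex. \<exists>y\<in>{a..b}. \<forall>j\<in>J. \<epsilon> < infdist (E j) (horizontal_trace v y)"
  using assms
proof (induction J arbitrary: a b rule: finite_induct)
  case empty
  then show ?case
    by (intro exI[of _ 1]) auto
next
  case (insert j J)
  then show ?case
    using levels_avoided_insert[of J] by blast
qed

end

lemma open_strip: "open {z::complex. \<bar>Im z\<bar> < \<rho>}"
  by (intro open_Collect_less continuous_intros)

lemma convex_strip: "convex {z::complex. \<bar>Im z\<bar> < \<rho>}"
proof -
  have "{z::complex. \<bar>Im z\<bar> < \<rho>} = {z. Im z < \<rho>} \<inter> {z. Im z > - \<rho>}"
    by auto
  then show ?thesis
    by (simp add: convex_Int convex_halfspace_Im_lt convex_halfspace_Im_gt)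
qed

theorem mainTheorem2:
  fixes v :: "complex \<Rightarrow> complex" and \<rho> :: real
  assumes rho_pos: "\<rho> > 0"
    and holo: "v holomorphic_on {z. \<bar>Im z\<bar> < \<rho>}"
    and bdd: "bounded (v ` {z. \<bar>Im z\<bar> < \<rho>})"
    and periodic: "\<And>z. \<bar>Im z\<bar> < \<rho> \<Longrightarrow> v (z + 1) = v z"
    and nonconst: "\<exists>z\<in>{z. \<bar>Im z\<bar> < \<rho>}. \<exists>w\<in>{z. \<bar>Im z\<bar> < \<rho>}. v z \<noteq> v w"
  shows "\<forall>\<delta> (k::nat). 0 < \<delta> \<and> \<delta> < \<rho> \<and> k \<ge> 1 \<longrightarrow>
           (\<exists>\<epsilon>>0. \<forall>E :: nat \<Rightarrow> real.
              Sup ((\<lambda>y. Min ((\<lambda>j. Inf ((\<lambda>x. cmod (v (Complex x y) - complex_of_real (E j))) ` {0..1}))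
                                 ` {1..k}))
                   ` {\<delta>/2..\<delta>}) > \<epsilon>)"
proof (intro allI impI)
  fix \<delta> :: real and k :: nat
  assume \<delta>k: "0 < \<delta> \<and> \<delta> < \<rho> \<and> k \<ge> 1"
  let ?S = "{z. \<bar>Im z\<bar> < \<rho>}"
  have "\<not> v constant_on ?S"
    using nonconst unfolding constant_on_def by metis
  moreover have "cbox (Complex 0 (\<delta>/2)) (Complex 1 \<delta>) \<subseteq> ?S"
    using \<delta>k by (auto simp: cbox_complex_eq)
  ultimately obtain \<epsilon> where "\<epsilon> > 0" and \<epsilon>: "\<And>E::nat \<Rightarrow> complex.
      \<exists>y\<in>{\<delta>/2..\<delta>}. \<forall>j\<in>{1..k}. \<epsilon> < infdist (E j) (horizontal_trace v y)"
    using levels_avoided[OF holo open_strip convex_connected[OF convex_strip], of "{1..k}" "\<delta>/2" \<delta>] \<delta>k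
    by auto
  obtain B where B: "\<And>z. z \<in> ?S \<Longrightarrow> norm (v z) \<le> B"
    using bdd unfolding bounded_iff by blast
  have "\<epsilon> < (SUP y\<in>{\<delta>/2..\<delta>}. MIN j\<in>{1..k}. infdist (of_real (E j)) (horizontal_trace v y))"
    for E :: "nat \<Rightarrow> real"
    using \<epsilon>[of "\<lambda>j. of_real (E j)"] B \<delta>k
    by (auto intro!: less_SUP_MIN_infdist_horizontal_trace[where B = B])
  with \<open>\<epsilon> > 0\<close> show "\<exists>\<epsilon>>0. \<forall>E :: nat \<Rightarrow> real.
      Sup ((\<lambda>y. Min ((\<lambda>j. Inf ((\<lambda>x. cmod (v (Complex x y) - complex_of_real (E j))) ` {0..1}))
                         ` {1..k})) ` {\<delta>/2..\<delta>}) > \<epsilon>"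
    by (auto simp: infdist_horizontal_trace)
qed

end
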